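(* For any deterministic MDP with effective planning window $W$, there is an RL algorithm (which may depend on $W$) whose sample complexity on this MDP is at most $T^2A^W$.
   Context: Deterministic finite-horizon MDP $\mathcal M=(\mathcal S,\mathcal A,T,s_1,f,R)$: finite states, actions with $A=|\mathcal A|$, start state $s_1$, transitions $s_{t+1}=f(s_t,a_t)$, rewards $R(s_t,a_t)$, steps $t\in[T]$, no discounting; a policy is optimal if it maximizes $J(\pi)=\mathbb E_\pi[\sum_{t=1}^TR(s_t,a_t)]$. An RL algorithm knows $\mathcal A$ and $T$, interacts only by running episodes from $s_1$ (observing states and rewards), each episode counting $T$ timesteps; its sample complexity is the least $n$ such that its output after $n$ timesteps is optimal with probability at least $1/2$. Q-value iteration: $Q'=\mathrm{QVI}(Q)$ with $Q'_t(s,a)=R(s,a)+\max_{a'}Q_{t+1}(f(s,a),a')$ for $t<T$, $Q'_T(s,a)=R(s,a)$; $\Pi(Q)$ is the set of deterministic policies with $\pi_t(s)\in\arg\max_aQ_t(s,a)$ for all $s,t$. Define $Q^1_t(s,a)=R(s,a)$ for all $t$ and $Q^i=\mathrm{QVI}(Q^{i-1})$ for $i=2,\dots,T$. The effective planning window $W$ is the least $W\in[T]$ such that every policy in $\Pi(Q^W)$ is optimal. *)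

theory Defs
  imports "HOL-Probability.Probability"
begin

text \<open>The action set is the (finite, nonempty) type 'a, so A = CARD('a).
  States live in a type 's; the MDP's state space is a finite subset of it.\<close>

record ('s, 'a) mdp =
  states :: "'s set"
  start  :: 's
  trans  :: "'s \<Rightarrow> 'a \<Rightarrow> 's"
  rew    :: "'s \<Rightarrow> 'a \<Rightarrow> real"

definition wf_mdp :: "('s, 'a) mdp \<Rightarrow> bool" where
  "wf_mdp M \<longleftrightarrow> finite (states M) \<and> start M \<in> states M \<and>
     (\<forall>s\<in>states M. \<forall>a. trans M s a \<in> states M)"

text \<open>Deterministic (time-dependent, Markov) policies: pi t s, with t in {1..T}.\<close>
type_synonym ('s, 'a) policy = "nat \<Rightarrow> 's \<Rightarrow> 'a"

text \<open>pstate M pi n is the state at timestep n+1 when following pi from the start state.\<close>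
primrec pstate :: "('s, 'a) mdp \<Rightarrow> ('s, 'a) policy \<Rightarrow> nat \<Rightarrow> 's" where
  "pstate M \<pi> 0 = start M"
| "pstate M \<pi> (Suc n) = trans M (pstate M \<pi> n) (\<pi> (Suc n) (pstate M \<pi> n))"

definition J :: "('s, 'a) mdp \<Rightarrow> nat \<Rightarrow> ('s, 'a) policy \<Rightarrow> real" where
  "J M T \<pi> = (\<Sum>t\<in>{1..T}. rew M (pstate M \<pi> (t - 1)) (\<pi> t (pstate M \<pi> (t - 1))))"

definition optimal :: "('s, 'a) mdp \<Rightarrow> nat \<Rightarrow> ('s, 'a) policy \<Rightarrow> bool" where
  "optimal M T \<pi> \<longleftrightarrow> (\<forall>\<pi>'. J M T \<pi>' \<le> J M T \<pi>)"

type_synonym ('s, 'a) qfun = "nat \<Rightarrow> 's \<Rightarrow> 'a \<Rightarrow> real"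

definition QVI :: "('s, 'a::finite) mdp \<Rightarrow> nat \<Rightarrow> ('s, 'a) qfun \<Rightarrow> ('s, 'a) qfun" where
  "QVI M T Q = (\<lambda>t s a. if t < T
      then rew M s a + Max (range (\<lambda>a'. Q (Suc t) (trans M s a) a'))
      else rew M s a)"

definition Q1 :: "('s, 'a) mdp \<Rightarrow> ('s, 'a) qfun" where
  "Q1 M = (\<lambda>t s a. rew M s a)"

text \<open>Qiter M T i = Q^i, i.e. Q^1 followed by (i-1) applications of QVI.\<close>
definition Qiter :: "('s, 'a::finite) mdp \<Rightarrow> nat \<Rightarrow> nat \<Rightarrow> ('s, 'a) qfun" where
  "Qiter M T i = (QVI M T ^^ (i - 1)) (Q1 M)"

definition greedy_policies :: "('s, 'a) mdp \<Rightarrow> nat \<Rightarrow> ('s, 'a) qfun \<Rightarrow> ('s, 'a) policy set" where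
  "greedy_policies M T Q =
     {\<pi>. \<forall>t\<in>{1..T}. \<forall>s\<in>states M. \<forall>a. Q t s a \<le> Q t s (\<pi> t s)}"

definition window_ok :: "('s, 'a::finite) mdp \<Rightarrow> nat \<Rightarrow> nat \<Rightarrow> bool" where
  "window_ok M T W \<longleftrightarrow> (\<forall>\<pi>\<in>greedy_policies M T (Qiter M T W). optimal M T \<pi>)"

definition is_eff_window :: "('s, 'a::finite) mdp \<Rightarrow> nat \<Rightarrow> nat \<Rightarrow> bool" where
  "is_eff_window M T W \<longleftrightarrow> W \<in> {1..T} \<and> window_ok M T W \<and>
     (\<forall>W'\<in>{1..T}. W' < W \<longrightarrow> \<not> window_ok M T W')"

type_synonym ('s, 'a) episode = "('s \<times> 'a \<times> real) list"

record ('s, 'a) det_alg =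
  next_action :: "('s, 'a) episode list \<Rightarrow> ('s, 'a) episode \<Rightarrow> 's \<Rightarrow> 'a"
  out_policy :: "('s, 'a) episode list \<Rightarrow> ('s, 'a) policy"

primrec ep_prefix :: "('s, 'a) mdp \<Rightarrow> ('s, 'a) det_alg \<Rightarrow> ('s, 'a) episode list \<Rightarrow> nat
    \<Rightarrow> ('s, 'a) episode \<times> 's" where
  "ep_prefix M d h 0 = ([], start M)"
| "ep_prefix M d h (Suc n) =
     (let (p, s) = ep_prefix M d h n; a = next_action d h p s
      in (p @ [(s, a, rew M s a)], trans M s a))"

definition run_episode :: "('s, 'a) mdp \<Rightarrow> nat \<Rightarrow> ('s, 'a) det_alg \<Rightarrow> ('s, 'a) episode list
    \<Rightarrow> ('s, 'a) episode" where
  "run_episode M T d h = fst (ep_prefix M d h T)"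

primrec history :: "('s, 'a) mdp \<Rightarrow> nat \<Rightarrow> ('s, 'a) det_alg \<Rightarrow> nat \<Rightarrow> ('s, 'a) episode list" where
  "history M T d 0 = []"
| "history M T d (Suc k) = history M T d k @ [run_episode M T d (history M T d k)]"

text \<open>Each episode counts T timesteps, so after n timesteps, n div T episodes are complete.\<close>
definition output_after :: "('s, 'a) mdp \<Rightarrow> nat \<Rightarrow> ('s, 'a) det_alg \<Rightarrow> nat \<Rightarrow> ('s, 'a) policy" where
  "output_after M T d n = out_policy d (history M T d (n div T))"

text \<open>A (randomized) RL algorithm: a distribution over deterministic strategies
  (the random seed is drawn up front; the environment is deterministic).\<close>
type_synonym ('s, 'a) rl_alg = "('s, 'a) det_alg pmf"

definition success_prob :: "('s, 'a) mdp \<Rightarrow> nat \<Rightarrow> ('s, 'a) rl_alg \<Rightarrow> nat \<Rightarrow> real" where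
  "success_prob M T alg n = measure_pmf.prob alg {d. optimal M T (output_after M T d n)}"

definition sample_complexity :: "('s, 'a) mdp \<Rightarrow> nat \<Rightarrow> ('s, 'a) rl_alg \<Rightarrow> enat" where
  "sample_complexity M T alg =
     (if \<exists>n. success_prob M T alg n \<ge> 1/2
      then enat (LEAST n. success_prob M T alg n \<ge> 1/2) else \<infinity>)"

end

theory Submission
  imports Defs
begin

text \<open>The algorithm fixes the first T actions one by one.  Having committed to a prefix
  of p actions, it runs one episode for each of the A^W action sequences of length W, each
  playing the prefix followed by that sequence, and commits to the first action of a sequence
  with the largest reward over the W steps after the prefix (cut off at the horizon).  In a
  deterministic MDP, Q^W_t(s, a) is exactly the largest such window return among sequences
  starting with a, so every committed action is greedy for Q^W along the committed trajectory.
  Following the plan on that trajectory and acting greedily elsewhere gives a policy in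
  \<Pi>(Q^W), which is optimal by the choice of W and collects the same reward as the plan.
  The T blocks of A^W episodes take T * A^W * T timesteps.\<close>

definition action_list :: "'a::finite list" where
  "action_list = (SOME xs. set xs = UNIV \<and> distinct xs)"

lemma action_list: "set (action_list :: 'a::finite list) = UNIV" "distinct (action_list :: 'a list)"
  unfolding action_list_def by (metis (mono_tags, lifting) finite_distinct_list finite someI_ex)+

definition action_seqs :: "nat \<Rightarrow> 'a::finite list list" where
  "action_seqs W = List.n_lists W action_list"

lemma length_action_seqs: "length (action_seqs W :: 'a::finite list list) = CARD('a) ^ W"
  using action_list[where 'a='a] by (simp add: action_seqs_def length_n_lists distinct_card[symmetric])

lemma set_action_seqs: "set (action_seqs W :: 'a::finite list list) = {w. length w = W}"
  using action_list[where 'a='a] by (simp add: action_seqs_def set_n_lists)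

lemma length_action_seqs_nth:
  "j < CARD('a) ^ W \<Longrightarrow> length (action_seqs W ! j :: 'a::finite list) = W"
  using nth_mem[of j "action_seqs W :: 'a list list"] by (simp add: set_action_seqs length_action_seqs)

primrec plan_state :: "('s, 'a) mdp \<Rightarrow> 'a list \<Rightarrow> nat \<Rightarrow> 's" where
  "plan_state M pl 0 = start M"
| "plan_state M pl (Suc n) = trans M (plan_state M pl n) (pl ! n)"

primrec plan_return :: "('s, 'a) mdp \<Rightarrow> 's \<Rightarrow> 'a list \<Rightarrow> real" where
  "plan_return M s [] = 0"
| "plan_return M s (a # w) = rew M s a + plan_return M (trans M s a) w"

lemma plan_state_cong: "(\<And>i. i < n \<Longrightarrow> pl ! i = pl' ! i) \<Longrightarrow> plan_state M pl n = plan_state M pl' n"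
  by (induction n) auto

lemma sum_rew_plan_state:
  "p + m \<le> length pl \<Longrightarrow>
   (\<Sum>r\<in>{p..<p + m}. rew M (plan_state M pl r) (pl ! r)) = plan_return M (plan_state M pl p) (take m (drop p pl))"
proof (induction m arbitrary: p)
  case (Suc m)
  have "{p..<p + Suc m} = insert p {Suc p..<Suc p + m}" by auto
  moreover have "take (Suc m) (drop p pl) = pl ! p # take m (drop (Suc p) pl)"
    using Suc.prems by (simp flip: Cons_nth_drop_Suc)
  ultimately show ?case using Suc.IH[of "Suc p"] Suc.prems by simp
qed simp

lemma Qiter_Suc: "1 \<le> i \<Longrightarrow> Qiter M T (Suc i) = QVI M T (Qiter M T i)"
  by (cases i) (auto simp: Qiter_def)

text \<open>At the 1-based time t, Suc T - t steps remain before the horizon.\<close>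

lemma Qiter_window_return:
  fixes M :: "('s, 'a::finite) mdp"
  assumes "1 \<le> i" and "1 \<le> t" and "t \<le> T"
  shows "(\<forall>w. length w = i - 1 \<longrightarrow> plan_return M s (take (Suc T - t) (a # w)) \<le> Qiter M T i t s a) \<and>
    (\<exists>w. length w = i - 1 \<and> plan_return M s (take (Suc T - t) (a # w)) = Qiter M T i t s a)"
  using assms
proof (induction i arbitrary: t s a rule: nat_induct_at_least)
  case base
  then show ?case by (auto simp: Qiter_def Q1_def)
next
  case (Suc i t s a)
  show ?case
  proof (cases "t < T")
    case True
    define F where "F a' = Qiter M T i (Suc t) (trans M s a) a'" for a'
    have Q: "Qiter M T (Suc i) t s a = rew M s a + Max (range F)"
      using True Suc.hyps by (simp add: Qiter_Suc QVI_def F_def)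
    have ret: "plan_return M s (take (Suc T - t) (a # a' # w)) =
        rew M s a + plan_return M (trans M s a) (take (Suc T - Suc t) (a' # w))" for a' w
      using True by (simp add: Suc_diff_le)
    have IH: "(\<forall>w. length w = i - 1 \<longrightarrow> plan_return M (trans M s a) (take (Suc T - Suc t) (a' # w)) \<le> F a') \<and>
        (\<exists>w. length w = i - 1 \<and> plan_return M (trans M s a) (take (Suc T - Suc t) (a' # w)) = F a')" for a'
      using Suc.IH[of "Suc t"] True unfolding F_def by simp
    obtain a' where a': "Max (range F) = F a'"
    proof -
      have "Max (range F) \<in> range F" by (intro Max_in) auto
      then show ?thesis using that by blast
    qed
    show ?thesis
    proof (intro conjI allI impI)
      fix w :: "'a list"
      assume "length w = Suc i - 1"
      with Suc.hyps obtain a'' w' where "w = a'' # w'" "length w' = i - 1"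
        by (cases w) auto
      then have "plan_return M s (take (Suc T - t) (a # w)) \<le> rew M s a + F a''"
        using IH[of a''] by (simp add: ret)
      also have "\<dots> \<le> Qiter M T (Suc i) t s a"
        unfolding Q by simp
      finally show "plan_return M s (take (Suc T - t) (a # w)) \<le> Qiter M T (Suc i) t s a" .
    next
      obtain w' where "length w' = i - 1" "plan_return M (trans M s a) (take (Suc T - Suc t) (a' # w')) = F a'"
        using IH[of a'] by blast
      then show "\<exists>w. length w = Suc i - 1 \<and> plan_return M s (take (Suc T - t) (a # w)) = Qiter M T (Suc i) t s a"
        using Suc.hyps by (intro exI[of _ "a' # w'"]) (simp add: Q ret a')
    qed
  next
    case False
    with Suc.prems have "t = T" by simp
    then show ?thesis
      using Suc.hyps by (auto simp: Qiter_Suc QVI_def intro: exI[of _ "replicate i a"])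
  qed
qed

lemma optimal_open_loop_if_greedy_along:
  fixes Q :: "('s, 'a::finite) qfun"
  assumes greedy_optimal: "\<forall>\<pi>\<in>greedy_policies M T Q. optimal M T \<pi>"
    and along: "\<And>p a. p < T \<Longrightarrow> Q (Suc p) (plan_state M pl p) a \<le> Q (Suc p) (plan_state M pl p) (pl ! p)"
  shows "optimal M T (\<lambda>t s. pl ! (t - 1))"
proof -
  define \<pi> :: "('s, 'a) policy" where
    "\<pi> t s = (if s = plan_state M pl (t - 1) then pl ! (t - 1) else arg_min_on (\<lambda>a. - Q t s a) UNIV)" for t s
  have "\<pi> \<in> greedy_policies M T Q"
    unfolding greedy_policies_def
  proof (intro CollectI ballI allI)
    fix t s a
    assume "t \<in> {1..T}"
    then show "Q t s a \<le> Q t s (\<pi> t s)"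
      using along[of "t - 1" a] arg_min_least[of UNIV a "\<lambda>a. - Q t s a"] by (auto simp: \<pi>_def)
  qed
  with greedy_optimal have "optimal M T \<pi>" by blast
  moreover have "pstate M \<pi> n = plan_state M pl n" "pstate M (\<lambda>t s. pl ! (t - 1)) n = plan_state M pl n" for n
    by (induction n) (simp_all add: \<pi>_def)
  then have "J M T (\<lambda>t s. pl ! (t - 1)) = J M T \<pi>"
    unfolding J_def by (intro sum.cong) (simp_all add: \<pi>_def)
  ultimately show ?thesis by (simp add: optimal_def)
qed

lemma sample_complexity_return_pmf_le:
  assumes "optimal M T (output_after M T d n)"
  shows "sample_complexity M T (return_pmf d) \<le> enat n"
proof -
  have success: "success_prob M T (return_pmf d) n \<ge> 1/2"
    using assms by (simp add: success_prob_def)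
  then have "sample_complexity M T (return_pmf d) = enat (LEAST n. success_prob M T (return_pmf d) n \<ge> 1/2)"
    by (auto simp: sample_complexity_def)
  also have "\<dots> \<le> enat n"
    using success by (simp add: Least_le)
  finally show ?thesis .
qed

lemma length_history [simp]: "length (history M T d k) = k"
  by (induction k) auto

lemma take_history: "k \<le> k' \<Longrightarrow> take k (history M T d k') = history M T d k"
  by (induction k' rule: dec_induct) auto

lemma nth_history: "i < k \<Longrightarrow> history M T d k ! i = run_episode M T d (history M T d i)"
  using take_history[of "Suc i" k M T d] nth_take[of i "Suc i" "history M T d k"] by (simp add: nth_append)

lemma run_episode_open_loop:
  assumes "\<And>p s. next_action d h p s = pl ! length p"
  shows "run_episode M T d h = map (\<lambda>r. (plan_state M pl r, pl ! r, rew M (plan_state M pl r) (pl ! r))) [0..<T]"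
proof -
  have "ep_prefix M d h n =
      (map (\<lambda>r. (plan_state M pl r, pl ! r, rew M (plan_state M pl r) (pl ! r))) [0..<n], plan_state M pl n)" for n
    by (induction n) (auto simp: assms Let_def)
  then show ?thesis by (simp add: run_episode_def)
qed

definition window_return :: "nat \<Rightarrow> nat \<Rightarrow> nat \<Rightarrow> ('s, 'a) episode \<Rightarrow> real" where
  "window_return T W t e = (\<Sum>i\<in>{t..<t + min W (T - t)}. snd (snd (e ! i)))"

lemma window_return_open_loop:
  assumes "t \<le> T" and "T \<le> length pl"
  shows "window_return T W t (map (\<lambda>r. (plan_state M pl r, pl ! r, rew M (plan_state M pl r) (pl ! r))) [0..<T]) =
    plan_return M (plan_state M pl t) (take (min W (T - t)) (drop t pl))"
proof -
  have "window_return T W t (map (\<lambda>r. (plan_state M pl r, pl ! r, rew M (plan_state M pl r) (pl ! r))) [0..<T]) =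
      (\<Sum>r\<in>{t..<t + min W (T - t)}. rew M (plan_state M pl r) (pl ! r))"
    unfolding window_return_def by (intro sum.cong) auto
  also have "\<dots> = plan_return M (plan_state M pl t) (take (min W (T - t)) (drop t pl))"
    using assms by (intro sum_rew_plan_state) simp
  finally show ?thesis .
qed

definition best_trial :: "nat \<Rightarrow> nat \<Rightarrow> nat \<Rightarrow> ('s, 'a) episode list \<Rightarrow> nat" where
  "best_trial T W t blk = arg_min_on (\<lambda>j. - window_return T W t (blk ! j)) {..<length blk}"

lemma best_trial_less: "blk \<noteq> [] \<Longrightarrow> best_trial T W t blk < length blk"
  using arg_min_if_finite(1)[of "{..<length blk}"] by (auto simp: best_trial_def)

lemma window_return_le_best_trial:
  "j < length blk \<Longrightarrow> window_return T W t (blk ! j) \<le> window_return T W t (blk ! best_trial T W t blk)"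
  using arg_min_least[of "{..<length blk}" j "\<lambda>j. - window_return T W t (blk ! j)"]
  by (auto simp: best_trial_def)

definition trial_block :: "nat \<Rightarrow> ('s, 'a::finite) episode list \<Rightarrow> nat \<Rightarrow> ('s, 'a) episode list" where
  "trial_block W h t = take (CARD('a) ^ W) (drop (t * CARD('a) ^ W) h)"

primrec committed :: "nat \<Rightarrow> nat \<Rightarrow> ('s, 'a::finite) episode list \<Rightarrow> nat \<Rightarrow> 'a list" where
  "committed T W h 0 = []"
| "committed T W h (Suc t) =
     committed T W h t @ [hd (action_seqs W ! best_trial T W t (trial_block W h t))]"

text \<open>Episode number p * A^W + j plays the committed prefix of length p followed by the j-th
  action sequence; the padding only fills the plan up to the horizon and is never scored.\<close>

definition trial_plan :: "nat \<Rightarrow> nat \<Rightarrow> ('s, 'a::finite) episode list \<Rightarrow> 'a list" where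
  "trial_plan T W h = committed T W h (length h div CARD('a) ^ W)
     @ action_seqs W ! (length h mod CARD('a) ^ W) @ replicate T undefined"

definition window_alg :: "nat \<Rightarrow> nat \<Rightarrow> ('s, 'a::finite) det_alg" where
  "window_alg T W = \<lparr>next_action = (\<lambda>h p s. trial_plan T W h ! length p),
                     out_policy = (\<lambda>h t s. committed T W h T ! (t - 1))\<rparr>"

lemma length_committed [simp]: "length (committed T W h t) = t"
  by (induction t) auto

lemma take_committed: "t \<le> t' \<Longrightarrow> take t (committed T W h t') = committed T W h t"
  by (induction t' rule: dec_induct) auto

lemma committed_take:
  fixes h :: "('s, 'a::finite) episode list"
  shows "t * CARD('a) ^ W \<le> k \<Longrightarrow> committed T W (take k h) t = committed T W h t"
proof (induction t)
  case (Suc t)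
  have "Suc t * CARD('a) ^ W \<le> k" using Suc.prems by simp
  then have "trial_block W (take k h) t = trial_block W h t"
    by (simp add: trial_block_def take_drop min_def)
  with Suc show ?case by simp
qed simp

lemma run_episode_window_alg:
  "run_episode M T (window_alg T W) h = map (\<lambda>r. (plan_state M (trial_plan T W h) r, trial_plan T W h ! r,
      rew M (plan_state M (trial_plan T W h) r) (trial_plan T W h ! r))) [0..<T]"
  by (rule run_episode_open_loop) (simp add: window_alg_def)

definition learned_plan :: "('s, 'a::finite) mdp \<Rightarrow> nat \<Rightarrow> nat \<Rightarrow> 'a list" where
  "learned_plan M T W = committed T W (history M T (window_alg T W) (T * CARD('a) ^ W)) T"

lemma length_learned_plan [simp]: "length (learned_plan M T W) = T"
  by (simp add: learned_plan_def)

lemma block_index_less: "p < T \<Longrightarrow> j < N \<Longrightarrow> p * N + j < T * (N::nat)"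
  by (metis add_less_cancel_left less_le_trans mult_Suc mult_le_mono1 Suc_leI add.commute)

lemma trial_plan_history:
  fixes M :: "('s, 'a::finite) mdp" and T W :: nat
  defines "H \<equiv> history M T (window_alg T W)"
  assumes "p < T" and "j < CARD('a) ^ W"
  shows "trial_plan T W (H (p * CARD('a) ^ W + j)) =
    take p (learned_plan M T W) @ action_seqs W ! j @ replicate T undefined"
proof -
  let ?N = "CARD('a) ^ W"
  have "committed T W (H (p * ?N + j)) p = committed T W (take (p * ?N + j) (H (T * ?N))) p"
    using block_index_less[OF assms(2,3)] by (simp add: H_def take_history)
  also have "\<dots> = take p (learned_plan M T W)"
    using assms by (simp add: committed_take take_committed learned_plan_def H_def)
  finally show ?thesis
    using assms by (simp add: trial_plan_def H_def)
qed

lemma window_return_trial_block: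
  fixes M :: "('s, 'a::finite) mdp" and T W :: nat
  defines "H \<equiv> history M T (window_alg T W)"
  assumes p: "p < T" and j: "j < CARD('a) ^ W"
  shows "window_return T W p (trial_block W (H (T * CARD('a) ^ W)) p ! j) =
    plan_return M (plan_state M (learned_plan M T W) p) (take (T - p) (action_seqs W ! j))"
proof -
  let ?N = "CARD('a) ^ W"
  define trial where "trial = trial_plan T W (H (p * ?N + j))"
  have trial: "trial = take p (learned_plan M T W) @ action_seqs W ! j @ replicate T undefined"
    unfolding trial_def H_def using p j by (rule trial_plan_history)
  have "p * ?N \<le> length (H (T * ?N))"
    using p by (simp add: H_def)
  then have "trial_block W (H (T * ?N)) p ! j = H (T * ?N) ! (p * ?N + j)"
    using j by (simp add: trial_block_def)
  also have "\<dots> = run_episode M T (window_alg T W) (H (p * ?N + j))"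
    unfolding H_def using block_index_less[OF p j] by (rule nth_history)
  finally have "window_return T W p (trial_block W (H (T * ?N)) p ! j) =
      plan_return M (plan_state M trial p) (take (min W (T - p)) (drop p trial))"
    using p by (simp add: run_episode_window_alg window_return_open_loop trial_def[symmetric] trial)
  also have "plan_state M trial p = plan_state M (learned_plan M T W) p"
    using p by (intro plan_state_cong) (simp add: trial nth_append)
  also have "take (min W (T - p)) (drop p trial) = take (T - p) (action_seqs W ! j)"
    using p length_action_seqs_nth[OF j] by (simp add: trial min_def)
  finally show ?thesis .
qed

lemma learned_plan_greedy:
  fixes M :: "('s, 'a::finite) mdp" and T W :: nat
  defines "pl \<equiv> learned_plan M T W"
  assumes W: "1 \<le> W" and p: "p < T"
  shows "Qiter M T W (Suc p) (plan_state M pl p) a \<le> Qiter M T W (Suc p) (plan_state M pl p) (pl ! p)"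
proof -
  let ?N = "CARD('a) ^ W" and ?s = "plan_state M pl p"
  let ?Q = "Qiter M T W (Suc p) ?s"
  define blk where "blk = trial_block W (history M T (window_alg T W) (T * ?N)) p"
  define score where "score j = plan_return M ?s (take (T - p) (action_seqs W ! j))" for j
  have "?N \<le> T * ?N - p * ?N"
    using p by (simp flip: diff_mult_distrib)
  then have length_blk: "length blk = ?N"
    by (simp add: blk_def trial_block_def)
  have window_return_blk: "window_return T W p (blk ! j) = score j" if "j < ?N" for j
    unfolding blk_def score_def pl_def using p that by (rule window_return_trial_block)
  define b where "b = best_trial T W p blk"
  have b: "b < ?N"
    unfolding b_def using best_trial_less[of blk] length_blk by fastforce
  have score_le: "score j \<le> score b" if "j < ?N" for j
    using window_return_le_best_trial[of j blk T W p] that b length_blk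
    by (simp add: window_return_blk b_def)
  have "pl ! p = take (Suc p) pl ! p" by simp
  also have "take (Suc p) pl = committed T W (history M T (window_alg T W) (T * ?N)) (Suc p)"
    using p by (simp add: pl_def learned_plan_def take_committed)
  finally have pl_p: "pl ! p = hd (action_seqs W ! b)"
    by (simp add: nth_append b_def blk_def)
  obtain w where w: "length w = W - 1" "plan_return M ?s (take (T - p) (a # w)) = ?Q a"
    using Qiter_window_return[OF W, of "Suc p" T M ?s a] p by auto
  with W have "a # w \<in> set (action_seqs W)"
    by (simp add: set_action_seqs)
  then obtain j where j: "j < ?N" "action_seqs W ! j = a # w"
    by (auto simp: in_set_conv_nth length_action_seqs)
  obtain c :: 'a and v where cv: "action_seqs W ! b = c # v" "length v = W - 1"
    using length_action_seqs_nth[OF b] W by (cases "action_seqs W ! b :: 'a list") auto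
  have "?Q a = score j"
    using w j by (simp add: score_def)
  also have "\<dots> \<le> score b"
    using j(1) by (rule score_le)
  also have "\<dots> \<le> ?Q c"
    using Qiter_window_return[OF W, of "Suc p" T M ?s c] p cv by (auto simp: score_def)
  finally show ?thesis
    using pl_p cv by simp
qed

theorem mainTheorem12:
  fixes T W :: nat
  shows "\<exists>alg :: ('s, 'a::finite) rl_alg.
           \<forall>M :: ('s, 'a) mdp. wf_mdp M \<and> is_eff_window M T W \<longrightarrow>
             sample_complexity M T alg \<le> enat (T^2 * CARD('a)^W)"
proof (intro exI allI impI)
  fix M :: "('s, 'a) mdp"
  assume "wf_mdp M \<and> is_eff_window M T W"
  then have W: "1 \<le> W" "W \<le> T" and window: "window_ok M T W"
    by (auto simp: is_eff_window_def)
  have "optimal M T (\<lambda>t s. learned_plan M T W ! (t - 1))"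
    using window learned_plan_greedy[OF W(1)] unfolding window_ok_def
    by (rule optimal_open_loop_if_greedy_along)
  moreover have "output_after M T (window_alg T W) (T^2 * CARD('a)^W) = (\<lambda>t s. learned_plan M T W ! (t - 1))"
    using W by (simp add: output_after_def window_alg_def learned_plan_def power2_eq_square)
  ultimately show "sample_complexity M T (return_pmf (window_alg T W)) \<le> enat (T^2 * CARD('a)^W)"
    by (intro sample_complexity_return_pmf_le) simp
qed

end
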